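(* Let $T$ be a rooted binary phylogenetic tree (root of out-degree 2) with leaf set $X$, $|X|\ge 3$, and edge substitution probabilities $p_e\in[0,\tfrac12]$, under the $N_2$ model. Let $y,z\in X$ be two leaves forming a cherry with common parent $w$, and let $p_y,p_z$ be the substitution probabilities of the edges $(w,y)$ and $(w,z)$. Put $$\theta=(1-p_y)(1-p_z)+p_yp_z \quad(\text{the probability that } f(y)=f(z)),\qquad \pi=\frac{p_yp_z}{\theta}.$$ Then $\pi\le\min\{p_y,p_z\}$ and $$RA_{\rm MP}(T)=\theta\cdot RA_{\rm MP}(T'_\pi)+(1-\theta)\cdot RA_{\rm MP}(T'').$$
   Context: A rooted binary phylogenetic tree is a finite tree with a distinguished root vertex $\rho$, all edges directed away from $\rho$, in which $\rho$ has out-degree 2 (such a tree is written $T$) or out-degree 1 (written $\dot T$; the edge at $\rho$ is then called the stem edge), and every other vertex has in-degree 1 and out-degree 0 or 2; vertices of out-degree 0 are leaves, forming the leaf set $X$. Under the Neyman $r$-state model $N_r$ ($r\ge2$) on a state set $\mathcal A$ with $|\mathcal A|=r$, each edge $e$ carries a substitution probability $p_e\in[0,\frac{r-1}{r}]$; given the root state $F(\rho)$, states propagate independently along edges: for an edge $(u,v)$, $F(v)=F(u)$ with probability $1-p_e$, and otherwise $F(v)$ is uniform among the $r-1$ states different from $F(u)$. The character is $f=F|_X$. For a vertex $v$, $p(v)$ is the probability that $F(v)\neq F(\rho)$. Fitch sets: each leaf $x$ gets $\mathrm{FS}(x)=\{f(x)\}$; a vertex $v$ with children $v_1,v_2$ gets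 $\mathrm{FS}(v_1)\cap\mathrm{FS}(v_2)$ if this is nonempty and $\mathrm{FS}(v_1)\cup\mathrm{FS}(v_2)$ otherwise; a vertex with a single child gets the Fitch set of its child. $\mathrm{FS}(f,T)=\mathrm{FS}(\rho)$, and $\mathrm{MP}(f,T)$ is a state chosen uniformly at random from $\mathrm{FS}(f,T)$. The reconstruction accuracy of maximum parsimony is $RA_{\rm MP}(T)=\mathbb P(\mathrm{MP}(f,T)=\alpha\mid F(\rho)=\alpha)$ (independent of $\alpha$ by symmetry). Vertices of in-degree 1 and out-degree 1 may be suppressed (merging two consecutive edges into one with the composed substitution probability, which leaves the distribution of leaf states unchanged). The tree $T'_\pi$ is obtained from $T$ by deleting the leaves $y,z$ and their incident edges, attaching a new leaf $w'$ to $w$ via an edge $(w,w')$ with substitution probability $\pi$, and suppressing $w$. The tree $T''$ is obtained from $T$ by deleting $y$, $z$, $w$, and all edges incident to them (including the edge into $w$), and suppressing the resulting vertex of in- and out-degree 1 (if the parent of $w$ was the root, the result is a tree whose root has out-degree 1). *)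

theory Defs
  imports "HOL-Probability.Probability_Mass_Function"
begin

text \<open>Node p l q r is an internal vertex of out-degree 2
  whose edge to the left child l has substitution probability p and whose edge to the right
  child r has substitution probability q.  Leaves are anonymous (the character is recorded
  positionally, see ctree below).\<close>
datatype tree = Leaf | Node real tree real tree

text \<open>A rooted phylogenetic tree: either the root has out-degree 2 (Rooted, the argument
  is then a Node), or the root has out-degree 1 with a stem edge of the given probability.\<close>
datatype rtree = Rooted tree | Stemmed real tree

fun num_leaves :: "tree \<Rightarrow> nat" where
  "num_leaves Leaf = 1"
| "num_leaves (Node p l q r) = num_leaves l + num_leaves r"

text \<open>All substitution probabilities lie in [0, (r-1)/r] = [0,1/2] (model N_2).\<close>
fun edges_ok :: "tree \<Rightarrow> bool" where
  "edges_ok Leaf = True"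
| "edges_ok (Node p l q r) = (0 \<le> p \<and> p \<le> 1/2 \<and> 0 \<le> q \<and> q \<le> 1/2 \<and> edges_ok l \<and> edges_ok r)"

text \<open>States: bool (two states). Along an edge with substitution probability p the state
  changes (to the unique other state) with probability p.\<close>
definition edge_pmf :: "real \<Rightarrow> bool \<Rightarrow> bool pmf" where
  "edge_pmf p a = map_pmf (\<lambda>flip. if flip then \<not> a else a) (bernoulli_pmf p)"

text \<open>A character on the leaves of a tree, recorded on a copy of the tree shape.\<close>
datatype ctree = CLeaf bool | CNode ctree ctree

fun char_pmf :: "tree \<Rightarrow> bool \<Rightarrow> ctree pmf" where
  "char_pmf Leaf a = return_pmf (CLeaf a)"
| "char_pmf (Node p l q r) a =
     bind_pmf (edge_pmf p a) (\<lambda>b. bind_pmf (edge_pmf q a) (\<lambda>c.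
     bind_pmf (char_pmf l b) (\<lambda>f. bind_pmf (char_pmf r c) (\<lambda>g. return_pmf (CNode f g)))))"

fun root_char_pmf :: "rtree \<Rightarrow> bool \<Rightarrow> ctree pmf" where
  "root_char_pmf (Rooted t) a = char_pmf t a"
| "root_char_pmf (Stemmed p t) a = bind_pmf (edge_pmf p a) (char_pmf t)"

text \<open>Fitch set at the top vertex (a vertex with a single child, i.e. the root of a stemmed
  tree, inherits the Fitch set of its child, so this is also FS(f,T) for Stemmed trees).\<close>
fun fitch :: "ctree \<Rightarrow> bool set" where
  "fitch (CLeaf b) = {b}"
| "fitch (CNode f g) = (if fitch f \<inter> fitch g \<noteq> {} then fitch f \<inter> fitch g else fitch f \<union> fitch g)"

definition mp_prob :: "bool set \<Rightarrow> bool \<Rightarrow> real" where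
  "mp_prob S a = (if a \<in> S then 1 / real (card S) else 0)"

text \<open>Reconstruction accuracy P(MP(f,T) = \<alpha> | F(\<rho>) = \<alpha>).\<close>
definition RA_MP :: "rtree \<Rightarrow> bool \<Rightarrow> real" where
  "RA_MP T \<alpha> = measure_pmf.expectation (root_char_pmf T \<alpha>) (\<lambda>f. mp_prob (fitch f) \<alpha>)"

text \<open>One-hole contexts: the path from the root down to a vertex u.  In CL p c q t the hole
  lies in the left subtree, reached via an edge of probability p.\<close>
datatype ctx = Hole | CL real ctx real tree | CR real tree real ctx

fun plug :: "ctx \<Rightarrow> tree \<Rightarrow> tree" where
  "plug Hole s = s"
| "plug (CL p c q t) s = Node p (plug c s) q t"
| "plug (CR p t q c) s = Node p t q (plug c s)"

text \<open>Composition of two consecutive edges under N_2 (suppressing a degree-2 vertex).\<close>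
definition sub_comp :: "real \<Rightarrow> real \<Rightarrow> real" where
  "sub_comp p q = p + q - 2 * p * q"

fun hole_comp :: "real \<Rightarrow> ctx \<Rightarrow> ctx" where
  "hole_comp r Hole = Hole"
| "hole_comp r (CL p c q t) = (if c = Hole then CL (sub_comp p r) Hole q t else CL p (hole_comp r c) q t)"
| "hole_comp r (CR p t q c) = (if c = Hole then CR p t (sub_comp q r) Hole else CR p t q (hole_comp r c))"

text \<open>The tree with a cherry {y,z} (edge probabilities py, pz) below w; w hangs below u
  (edge pw), u has the other subtree S (edge ps); u sits at the hole of C.  Every rooted binary tree with a cherry has this form.\<close>
definition with_cherry :: "ctx \<Rightarrow> bool \<Rightarrow> real \<Rightarrow> real \<Rightarrow> tree \<Rightarrow> real \<Rightarrow> real \<Rightarrow> tree" where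
  "with_cherry C left pw ps S py pz =
     plug C (if left then Node pw (Node py Leaf pz Leaf) ps S else Node ps S pw (Node py Leaf pz Leaf))"

text \<open>T'_pi: the cherry replaced by a single leaf w' attached to w by an edge of probability
  pi, and w suppressed (edge pw composed with pi).\<close>
definition contract_cherry :: "ctx \<Rightarrow> bool \<Rightarrow> real \<Rightarrow> real \<Rightarrow> tree \<Rightarrow> real \<Rightarrow> rtree" where
  "contract_cherry C left pw ps S \<pi> =
     Rooted (plug C (if left then Node (sub_comp pw \<pi>) Leaf ps S else Node ps S (sub_comp pw \<pi>) Leaf))"

text \<open>T'': y, z, w and the edge into w deleted and u suppressed; if u was the root, the result
  is a stemmed tree whose stem edge is the old edge (u, root of S).\<close>
definition delete_cherry :: "ctx \<Rightarrow> real \<Rightarrow> tree \<Rightarrow> rtree" where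
  "delete_cherry C ps S = (if C = Hole then Stemmed ps S else Rooted (plug (hole_comp ps C) S))"

end

theory Submission
  imports Defs
begin

text \<open>Fitch's algorithm computes the Fitch set bottom-up by the join
  \<open>F, G \<mapsto> (if F \<inter> G \<noteq> {} then F \<inter> G else F \<union> G)\<close>, so the Fitch set of T depends on the
  cherry only through the Fitch set at w.  Condition on whether the two cherry leaves agree
  (probability \<theta>).  If they agree, that Fitch set is the singleton of the common state, which
  given the state at w differs from it with probability \<pi>: exactly a single leaf attached to w
  by an edge \<pi>, i.e. the tree T'_\<pi>.  If they disagree, it is the full state set, which is
  neutral for the join, so the cherry together with w may be deleted, giving T''.\<close>

lemma expectation_edge_pmf:
  assumes "0 \<le> p" "p \<le> 1"
  shows "measure_pmf.expectation (edge_pmf p a) f = f (\<not> a) * p + f a * (1 - p)"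
  using assms by (simp add: edge_pmf_def)

lemma pmf_edge_pmf:
  assumes "0 \<le> p" "p \<le> 1"
  shows "pmf (edge_pmf p a) x = (if x = a then 1 - p else p)"
  using assms by (simp add: edge_pmf_def map_pmf_def pmf_bind indicator_def)

lemma sub_comp_bounds:
  assumes "0 \<le> p" "p \<le> 1" "0 \<le> r" "r \<le> 1"
  shows "0 \<le> sub_comp p r" "sub_comp p r \<le> 1"
proof -
  have "0 \<le> p * (1 - r) + r * (1 - p)" using assms by simp
  then show "0 \<le> sub_comp p r" by (simp add: sub_comp_def algebra_simps)
  have "0 \<le> (1 - p) * (1 - r) + r * p" using assms by simp
  then show "sub_comp p r \<le> 1" by (simp add: sub_comp_def algebra_simps)
qed

lemma bind_edge_pmf_edge_pmf:
  assumes "0 \<le> p" "p \<le> 1" "0 \<le> r" "r \<le> 1"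
  shows "bind_pmf (edge_pmf p a) (edge_pmf r) = edge_pmf (sub_comp p r) a"
  using assms sub_comp_bounds[OF assms]
  by (intro pmf_eqI) (simp add: pmf_bind expectation_edge_pmf pmf_edge_pmf sub_comp_def algebra_simps)

lemma bind_edge_pmf_bind_edge_pmf:
  assumes "0 \<le> p" "p \<le> 1" "0 \<le> r" "r \<le> 1"
  shows "bind_pmf (edge_pmf p a) (\<lambda>b. bind_pmf (edge_pmf r b) K) = bind_pmf (edge_pmf (sub_comp p r) a) K"
  by (simp add: bind_edge_pmf_edge_pmf[OF assms, symmetric] bind_assoc_pmf)

lemma expectation_bind_bernoulli_pmf:
  fixes f :: "'a::finite \<Rightarrow> real"
  assumes "0 \<le> \<theta>" "\<theta> \<le> 1"
  shows "measure_pmf.expectation (bind_pmf (bernoulli_pmf \<theta>) G) f =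
    \<theta> * measure_pmf.expectation (G True) f + (1 - \<theta>) * measure_pmf.expectation (G False) f"
proof -
  have sum: "\<And>M. measure_pmf.expectation M f = (\<Sum>x\<in>UNIV. f x * pmf M x)"
    by (rule integral_measure_pmf_real) auto
  have "(\<Sum>x\<in>UNIV. f x * pmf (bind_pmf (bernoulli_pmf \<theta>) G) x) =
     (\<Sum>x\<in>UNIV. \<theta> * (f x * pmf (G True) x) + (1 - \<theta>) * (f x * pmf (G False) x))"
    using assms by (simp add: pmf_bind algebra_simps)
  then show ?thesis
    unfolding sum by (simp add: sum.distrib sum_distrib_left)
qed

definition fitch_join :: "bool set \<Rightarrow> bool set \<Rightarrow> bool set" where
  "fitch_join F G = (if F \<inter> G \<noteq> {} then F \<inter> G else F \<union> G)"

lemma fitch_join_UNIV: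
  assumes "G \<noteq> {}"
  shows "fitch_join UNIV G = G" "fitch_join G UNIV = G"
  using assms by (auto simp: fitch_join_def)

lemma fitch_nonempty: "fitch f \<noteq> {}"
  by (induction f) auto

definition fitch_pmf :: "tree \<Rightarrow> bool \<Rightarrow> bool set pmf" where
  "fitch_pmf t a = map_pmf fitch (char_pmf t a)"

lemma fitch_pmf_Leaf: "fitch_pmf Leaf a = return_pmf {a}"
  by (simp add: fitch_pmf_def)

lemma fitch_pmf_Node:
  "fitch_pmf (Node p l q r) a =
     bind_pmf (edge_pmf p a) (\<lambda>b. bind_pmf (edge_pmf q a) (\<lambda>c.
     bind_pmf (fitch_pmf l b) (\<lambda>F. bind_pmf (fitch_pmf r c) (\<lambda>G. return_pmf (fitch_join F G)))))"
  by (simp add: fitch_pmf_def map_bind_pmf bind_map_pmf fitch_join_def)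

lemma fitch_join_commute: "fitch_join F G = fitch_join G F"
  by (auto simp: fitch_join_def)

lemma fitch_pmf_Node_swap: "fitch_pmf (Node q r p l) = fitch_pmf (Node p l q r)"
  by (rule ext, simp add: fitch_pmf_Node, subst bind_commute_pmf,
      simp add: bind_commute_pmf[of "fitch_pmf r _"], subst fitch_join_commute, rule refl)

lemma set_fitch_pmf_nonempty: "F \<in> set_pmf (fitch_pmf t a) \<Longrightarrow> F \<noteq> {}"
  by (auto simp: fitch_pmf_def fitch_nonempty)

lemma bind_fitch_pmf_join_UNIV:
  "bind_pmf (fitch_pmf t a) (\<lambda>G. return_pmf (fitch_join UNIV G)) = fitch_pmf t a"
  "bind_pmf (fitch_pmf t a) (\<lambda>G. return_pmf (fitch_join G UNIV)) = fitch_pmf t a"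
  by (subst bind_pmf_cong[OF refl], simp add: set_fitch_pmf_nonempty fitch_join_UNIV,
      rule bind_return_pmf')+

lemma RA_MP_Rooted: "RA_MP (Rooted t) \<alpha> = measure_pmf.expectation (fitch_pmf t \<alpha>) (\<lambda>F. mp_prob F \<alpha>)"
  by (simp add: RA_MP_def fitch_pmf_def)

lemma RA_MP_Stemmed:
  "RA_MP (Stemmed p t) \<alpha> =
     measure_pmf.expectation (bind_pmf (edge_pmf p \<alpha>) (fitch_pmf t)) (\<lambda>F. mp_prob F \<alpha>)"
proof -
  have "bind_pmf (edge_pmf p \<alpha>) (fitch_pmf t) = map_pmf fitch (root_char_pmf (Stemmed p t) \<alpha>)"
    by (simp add: fitch_pmf_def[abs_def] map_bind_pmf)
  then show ?thesis by (simp add: RA_MP_def)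
qed

fun ctx_fitch_pmf :: "ctx \<Rightarrow> (bool \<Rightarrow> bool set pmf) \<Rightarrow> bool \<Rightarrow> bool set pmf" where
  "ctx_fitch_pmf Hole h a = h a"
| "ctx_fitch_pmf (CL p c q t) h a =
     bind_pmf (edge_pmf p a) (\<lambda>b. bind_pmf (edge_pmf q a) (\<lambda>b'.
     bind_pmf (ctx_fitch_pmf c h b) (\<lambda>F. bind_pmf (fitch_pmf t b') (\<lambda>G. return_pmf (fitch_join F G)))))"
| "ctx_fitch_pmf (CR p t q c) h a =
     bind_pmf (edge_pmf p a) (\<lambda>b. bind_pmf (edge_pmf q a) (\<lambda>b'.
     bind_pmf (fitch_pmf t b) (\<lambda>F. bind_pmf (ctx_fitch_pmf c h b') (\<lambda>G. return_pmf (fitch_join F G)))))"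

lemma fitch_pmf_plug: "fitch_pmf (plug C s) a = ctx_fitch_pmf C (fitch_pmf s) a"
  by (induction C arbitrary: a) (simp_all add: fitch_pmf_Node)

lemma ctx_fitch_pmf_bind_pmf:
  "ctx_fitch_pmf C (\<lambda>a. bind_pmf M (\<lambda>e. g e a)) a = bind_pmf M (\<lambda>e. ctx_fitch_pmf C (g e) a)"
  by (induction C arbitrary: a) (simp_all add: bind_assoc_pmf bind_commute_pmf[of _ M])

fun ctx_edges_ok :: "ctx \<Rightarrow> bool" where
  "ctx_edges_ok Hole = True"
| "ctx_edges_ok (CL p c q t) = (0 \<le> p \<and> p \<le> 1/2 \<and> ctx_edges_ok c)"
| "ctx_edges_ok (CR p t q c) = (0 \<le> q \<and> q \<le> 1/2 \<and> ctx_edges_ok c)"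

lemma edges_ok_plugD: "edges_ok (plug C s) \<Longrightarrow> ctx_edges_ok C \<and> edges_ok s"
  by (induction C) auto

lemma ctx_fitch_pmf_hole_comp:
  assumes "C \<noteq> Hole" "ctx_edges_ok C" "0 \<le> r" "r \<le> 1"
  shows "ctx_fitch_pmf C (\<lambda>a. bind_pmf (edge_pmf r a) (fitch_pmf t)) a = fitch_pmf (plug (hole_comp r C) t) a"
  using assms
proof (induction C arbitrary: a)
  case Hole
  then show ?case by simp
next
  case (CL p c q t')
  show ?case
  proof (cases "c = Hole")
    case True
    have "0 \<le> p" "p \<le> 1" using CL.prems by auto
    with True \<open>0 \<le> r\<close> \<open>r \<le> 1\<close> show ?thesis
      by (simp add: fitch_pmf_Node bind_assoc_pmf bind_commute_pmf[of "edge_pmf q a"]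
          bind_edge_pmf_bind_edge_pmf)
  next
    case False
    with CL show ?thesis by (simp add: fitch_pmf_Node)
  qed
next
  case (CR p t' q c)
  show ?case
  proof (cases "c = Hole")
    case True
    have "0 \<le> q" "q \<le> 1" using CR.prems by auto
    with True \<open>0 \<le> r\<close> \<open>r \<le> 1\<close> show ?thesis
      by (simp add: fitch_pmf_Node bind_assoc_pmf bind_commute_pmf[of "fitch_pmf t' _"]
          bind_edge_pmf_bind_edge_pmf)
  next
    case False
    with CR show ?thesis by (simp add: fitch_pmf_Node)
  qed
qed

definition cherry_agree_prob :: "real \<Rightarrow> real \<Rightarrow> real" where
  "cherry_agree_prob py pz = (1 - py) * (1 - pz) + py * pz"

definition cherry_contract_prob :: "real \<Rightarrow> real \<Rightarrow> real" where
  "cherry_contract_prob py pz = py * pz / cherry_agree_prob py pz"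

lemma cherry_prob_bounds:
  assumes "0 \<le> py" "py \<le> 1/2" "0 \<le> pz" "pz \<le> 1/2"
  shows "1/2 \<le> cherry_agree_prob py pz" "cherry_agree_prob py pz \<le> 1"
    and "0 \<le> cherry_contract_prob py pz" "cherry_contract_prob py pz \<le> min py pz"
proof -
  let ?\<theta> = "cherry_agree_prob py pz"
  have "0 \<le> (1 - 2*py) * (1 - 2*pz)" using assms by simp
  then show \<theta>_ge: "1/2 \<le> ?\<theta>" by (simp add: cherry_agree_prob_def algebra_simps)
  have "0 \<le> py * (1 - pz) + pz * (1 - py)" using assms by simp
  then show "?\<theta> \<le> 1" by (simp add: cherry_agree_prob_def algebra_simps)
  show "0 \<le> cherry_contract_prob py pz"
    using assms \<theta>_ge by (simp add: cherry_contract_prob_def)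
  have "0 \<le> (1 - 2*pz) * (1 - py)" "0 \<le> (1 - 2*py) * (1 - pz)" using assms by simp_all
  then have "pz \<le> ?\<theta>" "py \<le> ?\<theta>" by (simp_all add: cherry_agree_prob_def algebra_simps)
  then have "py * pz \<le> py * ?\<theta>" "py * pz \<le> ?\<theta> * pz"
    using assms by (simp_all add: mult_left_mono mult_right_mono)
  then show "cherry_contract_prob py pz \<le> min py pz"
    using \<theta>_ge by (simp add: cherry_contract_prob_def divide_le_eq mult.commute)
qed

lemma fitch_pmf_cherry:
  assumes "0 \<le> py" "py \<le> 1/2" "0 \<le> pz" "pz \<le> 1/2"
  defines "\<theta> \<equiv> cherry_agree_prob py pz" and "\<pi> \<equiv> cherry_contract_prob py pz"
  shows "fitch_pmf (Node py Leaf pz Leaf) b = bind_pmf (bernoulli_pmf \<theta>)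
     (\<lambda>e. if e then map_pmf (\<lambda>x. {x}) (edge_pmf \<pi> b) else return_pmf UNIV)"
    (is "?cherry = ?mixture")
proof (rule pmf_eqI)
  fix X
  note bounds = cherry_prob_bounds[OF assms(1-4), folded \<theta>_def \<pi>_def]
  have "\<pi> * \<theta> = py * pz"
    using bounds by (simp add: \<pi>_def \<theta>_def cherry_contract_prob_def)
  then have \<theta>\<pi>: "\<pi> * \<theta> = py * pz" "(1 - \<pi>) * \<theta> = (1 - py) * (1 - pz)"
      "1 - \<theta> = py * (1 - pz) + pz * (1 - py)"
    by (simp_all add: \<theta>_def cherry_agree_prob_def algebra_simps)
  have sets: "(UNIV::bool set) \<noteq> {True}" "(UNIV::bool set) \<noteq> {False}" "{True} \<noteq> {False}"
    "{True, False} = UNIV" "{False, True} = UNIV"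
    by auto
  define q where "q = (if X = {b} then (1 - py) * (1 - pz) else if X = {\<not> b} then py * pz
    else if X = UNIV then py * (1 - pz) + pz * (1 - py) else 0)"
  have "pmf ?cherry X = q"
    using assms(1-4) sets unfolding q_def
    by (cases b; cases "X = {True}"; cases "X = {False}"; cases "X = UNIV")
       (simp_all add: fitch_pmf_Node fitch_pmf_Leaf pmf_bind expectation_edge_pmf map_pmf_def
          fitch_join_def indicator_def)
  moreover have "pmf ?mixture X = q"
    using assms(1-4) bounds sets \<theta>\<pi> unfolding q_def
    by (cases b; cases "X = {True}"; cases "X = {False}"; cases "X = UNIV")
       (simp_all add: pmf_bind expectation_edge_pmf map_pmf_def indicator_def)
  ultimately show "pmf ?cherry X = pmf ?mixture X" by simp
qed

lemma fitch_pmf_above_cherry: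
  assumes "0 \<le> py" "py \<le> 1/2" "0 \<le> pz" "pz \<le> 1/2" "0 \<le> pw" "pw \<le> 1"
  defines "\<theta> \<equiv> cherry_agree_prob py pz" and "\<pi> \<equiv> cherry_contract_prob py pz"
  shows "fitch_pmf (Node pw (Node py Leaf pz Leaf) ps S) a = bind_pmf (bernoulli_pmf \<theta>)
     (\<lambda>e. if e then fitch_pmf (Node (sub_comp pw \<pi>) Leaf ps S) a else bind_pmf (edge_pmf ps a) (fitch_pmf S))"
proof -
  note bounds = cherry_prob_bounds[OF assms(1-4), folded \<theta>_def \<pi>_def]
  have "\<pi> \<le> 1" using bounds assms(2) by simp
  define K where "K F c = bind_pmf (fitch_pmf S c) (\<lambda>G. return_pmf (fitch_join F G))" for F c
  have agree: "bind_pmf (edge_pmf pw a) (\<lambda>b. bind_pmf (edge_pmf ps a) (\<lambda>c.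
      bind_pmf (map_pmf (\<lambda>x. {x}) (edge_pmf \<pi> b)) (\<lambda>F. K F c)))
    = fitch_pmf (Node (sub_comp pw \<pi>) Leaf ps S) a"
    using assms(5,6) bounds \<open>\<pi> \<le> 1\<close>
    by (simp add: K_def fitch_pmf_Node fitch_pmf_Leaf map_pmf_def bind_assoc_pmf bind_return_pmf
        bind_commute_pmf[of "edge_pmf ps a"] bind_edge_pmf_bind_edge_pmf)
  have disagree: "bind_pmf (edge_pmf pw a) (\<lambda>b. bind_pmf (edge_pmf ps a) (\<lambda>c.
      bind_pmf (return_pmf UNIV) (\<lambda>F. K F c))) = bind_pmf (edge_pmf ps a) (fitch_pmf S)"
    by (simp add: K_def bind_return_pmf bind_fitch_pmf_join_UNIV)
  have "fitch_pmf (Node pw (Node py Leaf pz Leaf) ps S) a =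
      bind_pmf (edge_pmf pw a) (\<lambda>b. bind_pmf (edge_pmf ps a) (\<lambda>c. bind_pmf (bernoulli_pmf \<theta>) (\<lambda>e.
      bind_pmf (if e then map_pmf (\<lambda>x. {x}) (edge_pmf \<pi> b) else return_pmf UNIV) (\<lambda>F. K F c))))"
    by (simp add: K_def fitch_pmf_Node[of pw] fitch_pmf_cherry[OF assms(1-4), folded \<theta>_def \<pi>_def]
        bind_assoc_pmf)
  also have "\<dots> = bind_pmf (bernoulli_pmf \<theta>) (\<lambda>e. bind_pmf (edge_pmf pw a) (\<lambda>b. bind_pmf (edge_pmf ps a) (\<lambda>c.
      bind_pmf (if e then map_pmf (\<lambda>x. {x}) (edge_pmf \<pi> b) else return_pmf UNIV) (\<lambda>F. K F c))))"
    by (simp add: bind_commute_pmf[of _ "bernoulli_pmf \<theta>"])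
  also have "\<dots> = bind_pmf (bernoulli_pmf \<theta>)
     (\<lambda>e. if e then fitch_pmf (Node (sub_comp pw \<pi>) Leaf ps S) a else bind_pmf (edge_pmf ps a) (fitch_pmf S))"
    using agree disagree by (intro bind_pmf_cong) auto
  finally show ?thesis .
qed

lemma RA_MP_contract_cherry:
  "RA_MP (contract_cherry C left pw ps S \<pi>) \<alpha> =
     measure_pmf.expectation (ctx_fitch_pmf C (fitch_pmf (Node (sub_comp pw \<pi>) Leaf ps S)) \<alpha>)
       (\<lambda>F. mp_prob F \<alpha>)"
  by (simp add: contract_cherry_def RA_MP_Rooted fitch_pmf_plug fitch_pmf_Node_swap[of ps S])

lemma RA_MP_delete_cherry:
  assumes "ctx_edges_ok C" "0 \<le> ps" "ps \<le> 1"
  shows "RA_MP (delete_cherry C ps S) \<alpha> =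
     measure_pmf.expectation (ctx_fitch_pmf C (\<lambda>a. bind_pmf (edge_pmf ps a) (fitch_pmf S)) \<alpha>)
       (\<lambda>F. mp_prob F \<alpha>)"
  using assms ctx_fitch_pmf_hole_comp[OF _ assms]
  by (cases "C = Hole") (simp_all add: delete_cherry_def RA_MP_Stemmed RA_MP_Rooted)

theorem theorem1:
  fixes C :: ctx and left :: bool and pw ps py pz :: real and S :: tree and \<alpha> :: bool
  defines "T \<equiv> with_cherry C left pw ps S py pz"
  defines "\<theta> \<equiv> (1 - py) * (1 - pz) + py * pz"
  defines "\<pi> \<equiv> py * pz / \<theta>"
  assumes "edges_ok T"
    and "num_leaves T \<ge> 3"
  shows "\<pi> \<le> min py pz \<and>
    RA_MP (Rooted T) \<alpha> = \<theta> * RA_MP (contract_cherry C left pw ps S \<pi>) \<alpha>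
                        + (1 - \<theta>) * RA_MP (delete_cherry C ps S) \<alpha>"
proof -
  have T: "fitch_pmf T \<alpha> = ctx_fitch_pmf C (fitch_pmf (Node pw (Node py Leaf pz Leaf) ps S)) \<alpha>"
    by (simp add: T_def with_cherry_def fitch_pmf_plug fitch_pmf_Node_swap[of ps S])
  from \<open>edges_ok T\<close> have "ctx_edges_ok C" and edges:
      "0 \<le> py" "py \<le> 1/2" "0 \<le> pz" "pz \<le> 1/2" "0 \<le> pw" "pw \<le> 1/2" "0 \<le> ps" "ps \<le> 1/2"
    unfolding T_def with_cherry_def by (auto dest!: edges_ok_plugD split: if_splits)
  have \<theta>\<pi>: "\<theta> = cherry_agree_prob py pz" "\<pi> = cherry_contract_prob py pz"
    by (simp_all add: \<theta>_def \<pi>_def cherry_agree_prob_def cherry_contract_prob_def)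
  note bounds = cherry_prob_bounds[OF edges(1-4), folded \<theta>\<pi>]
  define g where "g e a = (if e then fitch_pmf (Node (sub_comp pw \<pi>) Leaf ps S) a
    else bind_pmf (edge_pmf ps a) (fitch_pmf S))" for e a
  have "fitch_pmf (Node pw (Node py Leaf pz Leaf) ps S) = (\<lambda>a. bind_pmf (bernoulli_pmf \<theta>) (\<lambda>e. g e a))"
    using fitch_pmf_above_cherry[OF edges(1-5), of ps S, folded \<theta>\<pi>] edges(6)
    by (simp add: g_def fun_eq_iff)
  then have "fitch_pmf T \<alpha> = bind_pmf (bernoulli_pmf \<theta>) (\<lambda>e. ctx_fitch_pmf C (g e) \<alpha>)"
    by (simp add: T ctx_fitch_pmf_bind_pmf)
  moreover have "g True = fitch_pmf (Node (sub_comp pw \<pi>) Leaf ps S)"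
    and "g False = (\<lambda>a. bind_pmf (edge_pmf ps a) (fitch_pmf S))"
    by (simp_all add: g_def fun_eq_iff)
  ultimately show ?thesis
    using bounds edges \<open>ctx_edges_ok C\<close>
    by (simp add: RA_MP_Rooted expectation_bind_bernoulli_pmf RA_MP_contract_cherry RA_MP_delete_cherry)
qed

end
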